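(* $X=\mathrm{Cay}(\mathfrak{a},\mathfrak{c},\mathfrak{d})$; consequently $\{\mathfrak{a},\mathfrak{c},\mathfrak{d}\}$ is Wilf-equivalent over Cayley permutations to the pattern $11$, i.e. $|\mathrm{Cay}_n(\mathfrak{a},\mathfrak{c},\mathfrak{d})|=|\mathrm{Cay}_n(11)|=n!$ for all $n$.
   Context: A Cayley permutation of length $n$ is a word $x=x(1)\cdots x(n)$ of positive integers in which every integer from $1$ to $\max(x)$ occurs; $\mathrm{Cay}_n$ is the set of these. $\mathrm{Cay}_n(11)$ is the set of permutations of $[n]$. Mesh patterns (for $x\in\mathrm{Cay}_n$): $x$ contains $\mathfrak{a}$ if there are indices $i<j<n$ with $x(j)<x(i)=x(j+1)$. $x$ contains $\mathfrak{c}$ if there are indices $i<j<n$ with $x(j+1)<x(i)<x(j)$ such that no entry of $x$ has value strictly between $x(j+1)$ and $x(i)$, no index $m\le j$ has $x(m)=x(j+1)$, and no index $m>j+1$ has $x(m)=x(i)$. $x$ contains $\mathfrak{d}$ if there is an index $i<n$ with $x(i+1)<x(i)$ such that no entry of $x$ has value strictly between $x(i+1)$ and $x(i)$, no index $m<i$ has $x(m)=x(i+1)$, and no index $m>i+1$ has $x(m)=x(i)$. $\mathrm{Cay}(\mathfrak{a},\mathfrak{c},\mathfrak{d})$ is the set of Cayley permutations containing none of them. The map $\eta$: for a permutation $\pi$ of $[n]$ and $i\in[n]$, let $J(i)=0$ if $\pi(i)=1$ and otherwise $J(i)$ is the index with $\pi(J(i))=\pi(i)-1$. The site before $\pi(1)$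 is $\eta$-active; the site after $\pi(i)$ is $\eta$-active iff $J(i)<i$, or $i<n$ and $\pi(i)<\pi(i+1)$. Let $\tilde\upsilon(\pi)(j)$ be the number of $\eta$-active sites to the left of $\pi(j)$. Then $\eta(\pi)$ is the word with $\eta(\pi)(\pi(j))=\tilde\upsilon(\pi)(j)$ for all $j$. $X=\{\eta(\pi):\pi \text{ a permutation}\}$. *)

theory Defs
  imports Main
begin

text \<open>Words are lists of naturals. The paper's 1-based index k corresponds
to list position k-1; we use the accessor w1 x k = x ! (k - 1).\<close>

definition w1 :: "nat list \<Rightarrow> nat \<Rightarrow> nat" where
  "w1 x k = x ! (k - 1)"

definition cayley :: "nat list \<Rightarrow> bool" where
  "cayley x \<longleftrightarrow> (\<exists>k. set x = {1..k})"

definition Cay :: "nat \<Rightarrow> nat list set" where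
  "Cay n = {x. cayley x \<and> length x = n}"

definition contains_11 :: "nat list \<Rightarrow> bool" where
  "contains_11 x \<longleftrightarrow> (\<exists>i j. 1 \<le> i \<and> i < j \<and> j \<le> length x \<and> w1 x i = w1 x j)"

definition contains_a :: "nat list \<Rightarrow> bool" where
  "contains_a x \<longleftrightarrow> (\<exists>i j. 1 \<le> i \<and> i < j \<and> j < length x \<and>
      w1 x j < w1 x i \<and> w1 x i = w1 x (j+1))"

definition contains_c :: "nat list \<Rightarrow> bool" where
  "contains_c x \<longleftrightarrow> (\<exists>i j. 1 \<le> i \<and> i < j \<and> j < length x \<and>
      w1 x (j+1) < w1 x i \<and> w1 x i < w1 x j \<and>
      (\<forall>m. 1 \<le> m \<and> m \<le> length x \<longrightarrow> \<not> (w1 x (j+1) < w1 x m \<and> w1 x m < w1 x i)) \<and>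
      (\<forall>m. 1 \<le> m \<and> m \<le> j \<longrightarrow> w1 x m \<noteq> w1 x (j+1)) \<and>
      (\<forall>m. j+1 < m \<and> m \<le> length x \<longrightarrow> w1 x m \<noteq> w1 x i))"

definition contains_d :: "nat list \<Rightarrow> bool" where
  "contains_d x \<longleftrightarrow> (\<exists>i. 1 \<le> i \<and> i < length x \<and>
      w1 x (i+1) < w1 x i \<and>
      (\<forall>m. 1 \<le> m \<and> m \<le> length x \<longrightarrow> \<not> (w1 x (i+1) < w1 x m \<and> w1 x m < w1 x i)) \<and>
      (\<forall>m. 1 \<le> m \<and> m < i \<longrightarrow> w1 x m \<noteq> w1 x (i+1)) \<and>
      (\<forall>m. i+1 < m \<and> m \<le> length x \<longrightarrow> w1 x m \<noteq> w1 x i))"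

definition Cay_acd :: "nat list set" where
  "Cay_acd = {x. cayley x \<and> \<not> contains_a x \<and> \<not> contains_c x \<and> \<not> contains_d x}"

definition Cay_n_acd :: "nat \<Rightarrow> nat list set" where
  "Cay_n_acd n = {x \<in> Cay n. \<not> contains_a x \<and> \<not> contains_c x \<and> \<not> contains_d x}"

definition Cay_n_11 :: "nat \<Rightarrow> nat list set" where
  "Cay_n_11 n = {x \<in> Cay n. \<not> contains_11 x}"

definition is_perm :: "nat list \<Rightarrow> bool" where
  "is_perm p \<longleftrightarrow> distinct p \<and> set p = {1..length p}"

definition etaJ :: "nat list \<Rightarrow> nat \<Rightarrow> nat" where
  "etaJ p i = (if w1 p i = 1 then 0
               else (THE k. 1 \<le> k \<and> k \<le> length p \<and> w1 p k = w1 p i - 1))"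

text \<open>Site s (0 \<le> s \<le> n) is the site after p(s); site 0 is the site before p(1).\<close>
definition eta_active :: "nat list \<Rightarrow> nat \<Rightarrow> bool" where
  "eta_active p s \<longleftrightarrow> s = 0 \<or>
     (1 \<le> s \<and> s \<le> length p \<and>
       (etaJ p s < s \<or> (s < length p \<and> w1 p s < w1 p (s+1))))"

definition upsilon :: "nat list \<Rightarrow> nat \<Rightarrow> nat" where
  "upsilon p j = card {s. s < j \<and> eta_active p s}"

text \<open>eta(p)(p(j)) = upsilon(p)(j): the entry at (1-based) position v is
upsilon at the index j with p(j) = v.\<close>
definition eta :: "nat list \<Rightarrow> nat list" where
  "eta p = map (\<lambda>v. upsilon p (THE j. 1 \<le> j \<and> j \<le> length p \<and> w1 p j = v))
                 [1..<length p + 1]"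

definition X :: "nat list set" where
  "X = {eta p | p. is_perm p}"

end

theory Submission
  imports Defs "HOL-Library.Product_Lexorder" "HOL-Combinatorics.Multiset_Permutations"
begin

text \<open>For a permutation p, upsilon p increases in unit steps and p decreases along each block of
  positions on which upsilon p is constant. So eta p is a Cayley permutation whose levels are the
  values on these blocks, and p is recovered from x = eta p by sorting the positions of x by
  increasing value, ties by decreasing position. The leftmost occurrence of a level ends its block
  and is followed by the rightmost occurrence of the next level; an occurrence of a, c or d would
  contradict the eta-activity of the site between such entries. Conversely, if x avoids a, c and d,
  the sorted positions form a permutation whose eta-active sites are exactly the level jumps of x,
  so eta maps it to x.\<close>

lemma w1_in_set: "1 \<le> j \<Longrightarrow> j \<le> length x \<Longrightarrow> w1 x j \<in> set x"
  by (simp add: w1_def)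

lemma in_set_w1:
  assumes "v \<in> set x"
  obtains j where "1 \<le> j" "j \<le> length x" "w1 x j = v"
proof -
  from assms obtain k where "k < length x" "x ! k = v" by (auto simp: in_set_conv_nth)
  then show thesis by (intro that[of "Suc k"]) (auto simp: w1_def)
qed

lemma perm_w1_bounds: "is_perm p \<Longrightarrow> 1 \<le> j \<Longrightarrow> j \<le> length p \<Longrightarrow> 1 \<le> w1 p j \<and> w1 p j \<le> length p"
  using w1_in_set[of j p] by (auto simp: is_perm_def)

lemma perm_w1_eq_iff:
  "is_perm p \<Longrightarrow> 1 \<le> i \<Longrightarrow> i \<le> length p \<Longrightarrow> 1 \<le> j \<Longrightarrow> j \<le> length p \<Longrightarrow>
    w1 p i = w1 p j \<longleftrightarrow> i = j"
  by (auto simp: is_perm_def w1_def nth_eq_iff_index_eq)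

definition pos :: "nat list \<Rightarrow> nat \<Rightarrow> nat" where
  "pos p v = (THE j. 1 \<le> j \<and> j \<le> length p \<and> w1 p j = v)"

lemma pos_w1: "is_perm p \<Longrightarrow> 1 \<le> j \<Longrightarrow> j \<le> length p \<Longrightarrow> pos p (w1 p j) = j"
  unfolding pos_def by (rule the_equality) (auto simp: perm_w1_eq_iff)

lemma pos_bounds_w1_pos:
  assumes "is_perm p" "1 \<le> v" "v \<le> length p"
  shows "1 \<le> pos p v \<and> pos p v \<le> length p \<and> w1 p (pos p v) = v"
proof -
  have "v \<in> set p" using assms by (simp add: is_perm_def)
  then obtain j where "1 \<le> j" "j \<le> length p" "w1 p j = v" by (rule in_set_w1)
  then show ?thesis using pos_w1[OF assms(1)] by auto
qed

section \<open>The statistic upsilon and the map eta\<close>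

lemma eta_pos: "eta p = map (\<lambda>v. upsilon p (pos p v)) [1..<length p + 1]"
  by (simp add: eta_def pos_def)

lemma length_eta [simp]: "length (eta p) = length p"
  by (simp add: eta_pos del: upt_Suc)

lemma w1_eta: "1 \<le> v \<Longrightarrow> v \<le> length p \<Longrightarrow> w1 (eta p) v = upsilon p (pos p v)"
proof -
  assume "1 \<le> v" "v \<le> length p"
  moreover have "[1..<length p + 1] ! (v - 1) = v" using calculation by (subst nth_upt) auto
  ultimately show ?thesis by (simp add: eta_pos w1_def del: upt_Suc)
qed

lemma w1_eta_w1: "is_perm p \<Longrightarrow> 1 \<le> j \<Longrightarrow> j \<le> length p \<Longrightarrow> w1 (eta p) (w1 p j) = upsilon p j"
  using perm_w1_bounds[of p j] by (simp add: w1_eta pos_w1)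

lemma upsilon_Suc: "upsilon p (Suc j) = upsilon p j + (if eta_active p j then 1 else 0)"
proof -
  have "{s. s < Suc j \<and> eta_active p s} =
      (if eta_active p j then insert j {s. s < j \<and> eta_active p s} else {s. s < j \<and> eta_active p s})"
    by (auto simp: less_Suc_eq)
  then show ?thesis by (simp add: upsilon_def)
qed

lemma upsilon_1 [simp]: "upsilon p 1 = 1"
  using upsilon_Suc[of p 0] by (simp add: upsilon_def eta_active_def)

lemma mono_upsilon: "mono (upsilon p)"
  by (rule monoI) (unfold upsilon_def, rule card_mono, auto)

lemma eta_active_iff:
  assumes "1 \<le> s" "s < length p"
  shows "eta_active p s \<longleftrightarrow> w1 p s < w1 p (Suc s) \<or> w1 p s = 1 \<or> pos p (w1 p s - 1) < s"
  using assms by (auto simp: eta_active_def etaJ_def pos_def)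

lemma descent_if_not_eta_active:
  assumes "is_perm p" "1 \<le> s" "s < length p" "\<not> eta_active p s"
  shows "w1 p (Suc s) < w1 p s"
proof -
  have "w1 p s \<noteq> w1 p (Suc s)" using perm_w1_eq_iff[of p s "Suc s"] assms(1-3) by simp
  moreover have "\<not> w1 p s < w1 p (Suc s)" using eta_active_iff[of s p] assms(2-4) by simp
  ultimately show ?thesis by simp
qed

lemma less_if_upsilon_less: "upsilon p s < upsilon p t \<Longrightarrow> s < t"
  by (metis monoD mono_upsilon not_le)

lemma not_eta_active_if_upsilon_eq:
  assumes "s < t" "upsilon p s = upsilon p t"
  shows "\<not> eta_active p s"
proof -
  have "upsilon p (Suc s) \<le> upsilon p t" using assms(1) by (simp add: monoD[OF mono_upsilon])
  then show ?thesis using assms(2) upsilon_Suc[of p s] by auto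
qed

lemma upsilon_block_decreasing:
  assumes "is_perm p" "1 \<le> s" "s < t" "t \<le> length p" "upsilon p s = upsilon p t"
  shows "w1 p t < w1 p s"
  using assms(3-5)
proof (induction t rule: less_induct)
  case (less t)
  then obtain t' where t: "t = Suc t'" "s \<le> t'" by (cases t) auto
  have "upsilon p s \<le> upsilon p t'" "upsilon p t' \<le> upsilon p t"
    using t by (auto intro: monoD[OF mono_upsilon])
  then have same: "upsilon p t' = upsilon p t" using less.prems(3) by simp
  have "w1 p t < w1 p t'"
    using descent_if_not_eta_active[OF assms(1), of t'] not_eta_active_if_upsilon_eq[of t' t p]
      same t less.prems(2) assms(2) by simp
  moreover have "w1 p t' < w1 p s" if "s < t'"
  proof (rule less.IH)
    show "t' < t" "s < t'" "t' \<le> length p" "upsilon p s = upsilon p t'"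
      using that t less.prems same by auto
  qed
  ultimately show ?case using t(2) by (cases "s = t'") auto
qed

section \<open>Eta maps permutations into Cayley permutations avoiding a, c, d\<close>

lemma eta_active_if_least_in_level:
  assumes "is_perm p" "1 \<le> t" "t < length p"
    and least: "\<And>m. 1 \<le> m \<Longrightarrow> m < w1 p t \<Longrightarrow> w1 (eta p) m \<noteq> upsilon p t"
  shows "eta_active p t"
proof (rule ccontr)
  assume inactive: "\<not> eta_active p t"
  then have "w1 p (Suc t) < w1 p t" by (rule descent_if_not_eta_active[OF assms(1-3)])
  moreover have "w1 (eta p) (w1 p (Suc t)) = upsilon p t"
    using w1_eta_w1[OF assms(1), of "Suc t"] upsilon_Suc[of p t] inactive assms(3) by simp
  moreover have "1 \<le> w1 p (Suc t)" using perm_w1_bounds[OF assms(1), of "Suc t"] assms(3) by simp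
  ultimately show False using least by blast
qed

lemma greatest_in_level_after_eta_active:
  assumes "is_perm p" "t < length p" "eta_active p t"
    and m: "1 \<le> m" "m \<le> length p" "w1 (eta p) m = upsilon p (Suc t)"
  shows "m \<le> w1 p (Suc t)"
proof -
  define r where "r = pos p m"
  have r: "1 \<le> r" "r \<le> length p" "w1 p r = m"
    using pos_bounds_w1_pos[OF assms(1) m(1,2)] by (auto simp: r_def)
  have level: "upsilon p (Suc t) = upsilon p r" using m w1_eta by (simp add: r_def)
  moreover have "upsilon p t < upsilon p (Suc t)" using upsilon_Suc[of p t] assms(3) by simp
  ultimately have "Suc t \<le> r" using less_if_upsilon_less[of p t r] by simp
  then show ?thesis
    using upsilon_block_decreasing[OF assms(1), of "Suc t" r] r level by (cases "Suc t = r") auto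
qed

lemma eta_avoids_a:
  assumes "is_perm p"
  shows "\<not> contains_a (eta p)"
proof
  assume "contains_a (eta p)"
  then obtain i j where ij: "1 \<le> i" "i < j" "j < length p"
      "w1 (eta p) j < w1 (eta p) i" "w1 (eta p) i = w1 (eta p) (Suc j)"
    by (auto simp: contains_a_def)
  define si sj sk where "si = pos p i" and "sj = pos p j" and "sk = pos p (Suc j)"
  have si: "1 \<le> si" "si \<le> length p" "w1 p si = i"
    using pos_bounds_w1_pos[OF assms, of i] ij by (auto simp: si_def)
  have sk: "1 \<le> sk" "sk \<le> length p" "w1 p sk = Suc j"
    using pos_bounds_w1_pos[OF assms, of "Suc j"] ij by (auto simp: sk_def)
  have level: "upsilon p sj < upsilon p sk" "upsilon p si = upsilon p sk"
    using ij w1_eta[of i p] w1_eta[of j p] w1_eta[of "Suc j" p] by (auto simp: si_def sj_def sk_def)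
  have "sk < si"
  proof -
    have "\<not> si < sk" using upsilon_block_decreasing[OF assms, of si sk] si sk level ij by auto
    moreover have "si \<noteq> sk" using si sk ij by auto
    ultimately show ?thesis by simp
  qed
  then have "\<not> eta_active p sk" using not_eta_active_if_upsilon_eq level by metis
  then have "\<not> sj < sk" using eta_active_iff[of sk p] sk \<open>sk < si\<close> si by (simp add: sj_def)
  then show False using less_if_upsilon_less level by blast
qed

lemma eta_avoids_d:
  assumes "is_perm p"
  shows "\<not> contains_d (eta p)"
proof
  let ?x = "w1 (eta p)"
  assume "contains_d (eta p)"
  then obtain i where i: "1 \<le> i" "i < length p" "?x (Suc i) < ?x i"
    and gap: "\<And>m. 1 \<le> m \<Longrightarrow> m \<le> length p \<Longrightarrow> \<not> (?x (Suc i) < ?x m \<and> ?x m < ?x i)"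
    and least: "\<And>m. 1 \<le> m \<Longrightarrow> m < i \<Longrightarrow> ?x m \<noteq> ?x (Suc i)"
    and greatest: "\<And>m. Suc i < m \<Longrightarrow> m \<le> length p \<Longrightarrow> ?x m \<noteq> ?x i"
    unfolding contains_d_def by auto
  define s t where "s = pos p i" and "t = pos p (Suc i)"
  have s: "1 \<le> s" "s \<le> length p" "w1 p s = i"
    using pos_bounds_w1_pos[OF assms, of i] i by (auto simp: s_def)
  have t: "1 \<le> t" "t \<le> length p" "w1 p t = Suc i"
    using pos_bounds_w1_pos[OF assms, of "Suc i"] i by (auto simp: t_def)
  have x: "?x i = upsilon p s" "?x (Suc i) = upsilon p t"
    using i w1_eta[of i p] w1_eta[of "Suc i" p] by (auto simp: s_def t_def)
  have "t < s" using less_if_upsilon_less i(3) x by simp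
  have active: "eta_active p t"
  proof (rule eta_active_if_least_in_level[OF assms t(1)])
    show "t < length p" using \<open>t < s\<close> s(2) by simp
    show "?x m \<noteq> upsilon p t" if "1 \<le> m" "m < w1 p t" for m
      using that least[of m] i(3) t(3) x(2) by (cases "m = i") auto
  qed
  define v where "v = w1 p (Suc t)"
  have v: "1 \<le> v" "v \<le> length p" "?x v = upsilon p (Suc t)"
    using perm_w1_bounds[OF assms, of "Suc t"] w1_eta_w1[OF assms, of "Suc t"] \<open>t < s\<close> s
    by (auto simp: v_def)
  have "upsilon p (Suc t) \<le> upsilon p s" using \<open>t < s\<close> by (simp add: monoD[OF mono_upsilon])
  then have level: "?x v = ?x i"
    using gap[OF v(1,2)] v(3) x upsilon_Suc[of p t] active by auto
  have "i \<le> v"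
    using greatest_in_level_after_eta_active[OF assms _ active, of i] \<open>t < s\<close> s i level v
    by (simp add: v_def)
  moreover have "v \<noteq> Suc i"
    using perm_w1_eq_iff[OF assms, of t "Suc t"] t \<open>t < s\<close> s by (simp add: v_def)
  ultimately have "v = i" using greatest[OF _ v(2)] level by fastforce
  then have "\<not> eta_active p t"
    using eta_active_iff[of t p] t \<open>t < s\<close> s i(1) pos_w1[OF assms s(1,2)] by (simp add: v_def)
  then show False using active by simp
qed

lemma eta_avoids_c:
  assumes "is_perm p"
  shows "\<not> contains_c (eta p)"
proof
  let ?x = "w1 (eta p)"
  assume "contains_c (eta p)"
  then obtain i j where ij: "1 \<le> i" "i < j" "j < length p" "?x (Suc j) < ?x i" "?x i < ?x j"
    and gap: "\<And>m. 1 \<le> m \<Longrightarrow> m \<le> length p \<Longrightarrow> \<not> (?x (Suc j) < ?x m \<and> ?x m < ?x i)"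
    and least: "\<And>m. 1 \<le> m \<Longrightarrow> m \<le> j \<Longrightarrow> ?x m \<noteq> ?x (Suc j)"
    and greatest: "\<And>m. Suc j < m \<Longrightarrow> m \<le> length p \<Longrightarrow> ?x m \<noteq> ?x i"
    unfolding contains_c_def by auto
  define s t r where "s = pos p i" and "t = pos p (Suc j)" and "r = pos p j"
  have s: "1 \<le> s" "s \<le> length p" "w1 p s = i"
    using pos_bounds_w1_pos[OF assms, of i] ij by (auto simp: s_def)
  have t: "1 \<le> t" "t \<le> length p" "w1 p t = Suc j"
    using pos_bounds_w1_pos[OF assms, of "Suc j"] ij by (auto simp: t_def)
  have x: "?x i = upsilon p s" "?x (Suc j) = upsilon p t" "?x j = upsilon p r"
    using ij w1_eta[of i p] w1_eta[of "Suc j" p] w1_eta[of j p] by (auto simp: s_def t_def r_def)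
  have "t < s" "t < r"
    using less_if_upsilon_less[of p t s] less_if_upsilon_less[of p t r] ij(4,5) x by auto
  have active: "eta_active p t"
  proof (rule eta_active_if_least_in_level[OF assms t(1)])
    show "t < length p" using \<open>t < s\<close> s(2) by simp
    show "?x m \<noteq> upsilon p t" if "1 \<le> m" "m < w1 p t" for m
      using that least[of m] t(3) x(2) by simp
  qed
  define v where "v = w1 p (Suc t)"
  have v: "1 \<le> v" "v \<le> length p" "?x v = upsilon p (Suc t)"
    using perm_w1_bounds[OF assms, of "Suc t"] w1_eta_w1[OF assms, of "Suc t"] \<open>t < s\<close> s
    by (auto simp: v_def)
  have "upsilon p (Suc t) \<le> upsilon p s" using \<open>t < s\<close> by (simp add: monoD[OF mono_upsilon])
  then have level: "?x v = ?x i"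
    using gap[OF v(1,2)] v(3) x upsilon_Suc[of p t] active by auto
  have "v \<noteq> Suc j"
    using perm_w1_eq_iff[OF assms, of t "Suc t"] t \<open>t < s\<close> s by (simp add: v_def)
  moreover have "\<not> Suc j < v" using greatest[of v] v(2) level by blast
  ultimately have "w1 p (Suc t) < w1 p t" using t(3) by (simp add: v_def)
  moreover have "pos p (w1 p t - 1) = r" using t(3) by (simp add: r_def)
  ultimately have "\<not> eta_active p t"
    using eta_active_iff[of t p] t(1,3) \<open>t < s\<close> s(2) \<open>t < r\<close> ij(1,2) by simp
  then show False using active by simp
qed

lemma image_atLeastAtMost_unit_steps:
  fixes g :: "nat \<Rightarrow> nat"
  assumes "g 0 = 0" "\<And>m. 1 \<le> g (Suc m)" "\<And>m. g m \<le> g (Suc m)" "\<And>m. g (Suc m) \<le> Suc (g m)"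
  shows "g ` {1..m} = {1..g m}"
proof (induction m)
  case 0
  then show ?case using assms(1) by simp
next
  case (Suc m)
  have "g ` {1..Suc m} = insert (g (Suc m)) {1..g m}" using Suc.IH by (simp add: atLeastAtMostSuc_conv)
  also have "\<dots> = {1..g (Suc m)}"
    using assms(2-4)[of m] by (cases "g (Suc m) = g m") (auto simp: atLeastAtMostSuc_conv)
  finally show ?case .
qed

lemma cayley_eta:
  assumes "is_perm p"
  shows "cayley (eta p)"
proof -
  have "pos p ` {1..length p} = {1..length p}"
  proof
    show "pos p ` {1..length p} \<subseteq> {1..length p}" using pos_bounds_w1_pos[OF assms] by auto
    show "{1..length p} \<subseteq> pos p ` {1..length p}"
    proof
      fix j assume "j \<in> {1..length p}"
      then show "j \<in> pos p ` {1..length p}"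
        using pos_w1[OF assms, of j] perm_w1_bounds[OF assms, of j] by (auto intro: rev_image_eqI)
    qed
  qed
  then have "set (eta p) = upsilon p ` {1..length p}"
    by (simp add: eta_pos image_image[symmetric] atLeastLessThanSuc_atLeastAtMost del: upt_Suc)
  also have "\<dots> = {1..upsilon p (length p)}"
  proof (rule image_atLeastAtMost_unit_steps)
    show "upsilon p 0 = 0" by (simp add: upsilon_def)
    show "1 \<le> upsilon p (Suc m)" for m
      using monoD[OF mono_upsilon, of 1 "Suc m" p] upsilon_1[of p] by linarith
  qed (simp_all add: upsilon_Suc)
  finally show ?thesis unfolding cayley_def ..
qed

section \<open>Inverting eta by sorting positions\<close>

text \<open>The negated position makes ties sort by decreasing position, the order in which a
  permutation p lists the positions of one level of eta p.\<close>

definition level_key :: "nat list \<Rightarrow> nat \<Rightarrow> nat \<times> int" where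
  "level_key x v = (w1 x v, - int v)"

lemma level_key_less_iff:
  "level_key x u < level_key x v \<longleftrightarrow> w1 x u < w1 x v \<or> w1 x u = w1 x v \<and> v < u"
  by (auto simp: level_key_def)

lemma inj_level_key: "inj (level_key x)"
  by (rule injI) (simp add: level_key_def)

definition level_order :: "nat list \<Rightarrow> nat list" where
  "level_order x = sort_key (level_key x) [1..<length x + 1]"

lemma length_level_order [simp]: "length (level_order x) = length x"
  by (simp add: level_order_def del: upt_Suc)

lemma is_perm_level_order: "is_perm (level_order x)"
  by (simp add: level_order_def is_perm_def atLeastLessThanSuc_atLeastAtMost del: upt_Suc)

lemma sorted_level_order: "sorted_wrt (<) (map (level_key x) (level_order x))"
  unfolding strict_sorted_iff level_order_def
  by (simp add: distinct_map inj_on_subset[OF inj_level_key] del: upt_Suc)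

lemma strict_sorted_map_w1_less_iff:
  fixes f :: "nat \<Rightarrow> 'a::linorder"
  assumes "sorted_wrt (<) (map f p)" "1 \<le> a" "a \<le> length p" "1 \<le> b" "b \<le> length p"
  shows "f (w1 p a) < f (w1 p b) \<longleftrightarrow> a < b"
proof -
  have "f (w1 p i) < f (w1 p j)" if "1 \<le> i" "i < j" "j \<le> length p" for i j
    using sorted_wrt_nth_less[OF assms(1), of "i - 1" "j - 1"] that by (simp add: w1_def)
  then show ?thesis using assms(2-5) by (metis less_asym linorder_neqE_nat)
qed

lemma level_order_less_iff:
  "1 \<le> a \<Longrightarrow> a \<le> length x \<Longrightarrow> 1 \<le> b \<Longrightarrow> b \<le> length x \<Longrightarrow>
    level_key x (w1 (level_order x) a) < level_key x (w1 (level_order x) b) \<longleftrightarrow> a < b"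
  using strict_sorted_map_w1_less_iff[OF sorted_level_order] by simp

lemma level_order_pos_less_iff:
  assumes "1 \<le> u" "u \<le> length x" "1 \<le> v" "v \<le> length x"
  shows "pos (level_order x) u < pos (level_order x) v \<longleftrightarrow> level_key x u < level_key x v"
  using level_order_less_iff[of "pos (level_order x) u" x "pos (level_order x) v"] assms
    pos_bounds_w1_pos[OF is_perm_level_order, of u x] pos_bounds_w1_pos[OF is_perm_level_order, of v x]
  by simp

lemma level_order_consecutive:
  assumes "1 \<le> s" "s < length x" "1 \<le> v" "v \<le> length x"
  shows "\<not> (level_key x (w1 (level_order x) s) < level_key x v \<and>
      level_key x v < level_key x (w1 (level_order x) (Suc s)))"
proof -
  let ?q = "level_order x"
  have "1 \<le> pos ?q v \<and> pos ?q v \<le> length x \<and> w1 ?q (pos ?q v) = v"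
    using pos_bounds_w1_pos[OF is_perm_level_order] assms(3,4) by simp
  then show ?thesis
    using level_order_less_iff[of s x "pos ?q v"] level_order_less_iff[of "pos ?q v" x "Suc s"] assms(1,2)
    by auto
qed

lemma level_order_eta:
  assumes "is_perm p"
  shows "level_order (eta p) = p"
  unfolding level_order_def
proof (rule sort_key_inj_key_eq)
  show "mset [1..<length (eta p) + 1] = mset p"
    using assms by (intro set_eq_iff_mset_eq_distinct[THEN iffD1])
      (auto simp: is_perm_def simp del: upt_Suc)
  show "inj_on (level_key (eta p)) (set [1..<length (eta p) + 1])"
    using inj_level_key by (rule inj_on_subset) simp
  show "sorted (map (level_key (eta p)) p)"
    unfolding sorted_iff_nth_Suc
  proof (intro allI impI)
    fix i assume "Suc i < length (map (level_key (eta p)) p)"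
    then have s: "1 \<le> Suc i" "Suc i < length p" by simp_all
    have x: "w1 (eta p) (w1 p (Suc i)) = upsilon p (Suc i)"
        "w1 (eta p) (w1 p (Suc (Suc i))) = upsilon p (Suc (Suc i))"
      using w1_eta_w1[OF assms] s by simp_all
    have "level_key (eta p) (w1 p (Suc i)) < level_key (eta p) (w1 p (Suc (Suc i)))"
      using upsilon_Suc[of p "Suc i"] descent_if_not_eta_active[OF assms s]
      by (auto simp: level_key_less_iff x)
    then show "map (level_key (eta p)) p ! i \<le> map (level_key (eta p)) p ! Suc i"
      using s by (simp add: w1_def)
  qed
qed

lemma level_order_first_value:
  assumes "cayley x" "1 \<le> length x"
  shows "w1 x (w1 (level_order x) 1) = 1"
proof (rule ccontr)
  let ?q = "level_order x"
  define u where "u = w1 ?q 1"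
  assume "w1 x (w1 ?q 1) \<noteq> 1"
  obtain k where k: "set x = {1..k}" using assms(1) by (auto simp: cayley_def)
  have u: "1 \<le> u" "u \<le> length x" "pos ?q u = 1"
    using perm_w1_bounds[OF is_perm_level_order, of 1 x] pos_w1[OF is_perm_level_order, of 1 x] assms(2)
    by (simp_all add: u_def)
  then have "1 < w1 x u" "1 \<in> set x"
    using w1_in_set[of u x] k \<open>w1 x (w1 ?q 1) \<noteq> 1\<close> by (auto simp: u_def)
  then obtain v where v: "1 \<le> v" "v \<le> length x" "w1 x v = 1" by (auto elim: in_set_w1)
  then have "pos ?q v < pos ?q u"
    using level_order_pos_less_iff[of v x u] u \<open>1 < w1 x u\<close> by (simp add: level_key_less_iff)
  then show False using u(3) pos_bounds_w1_pos[OF is_perm_level_order, of v x] v(1,2) by simp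
qed

lemma level_order_step_values:
  assumes "cayley x" "1 \<le> s" "s < length x"
  defines "u \<equiv> w1 (level_order x) s" and "w \<equiv> w1 (level_order x) (Suc s)"
  shows "w1 x w = w1 x u \<or> w1 x w = Suc (w1 x u)"
proof -
  let ?q = "level_order x"
  obtain k where k: "set x = {1..k}" using assms(1) by (auto simp: cayley_def)
  have u: "1 \<le> u" "u \<le> length x" "pos ?q u = s" and w: "1 \<le> w" "w \<le> length x"
    using perm_w1_bounds[OF is_perm_level_order, of s x] perm_w1_bounds[OF is_perm_level_order, of "Suc s" x]
      pos_w1[OF is_perm_level_order, of s x] assms(2,3)
    by (simp_all add: u_def w_def)
  have "level_key x u < level_key x w"
    using level_order_less_iff[of s x "Suc s"] assms(2,3) by (simp add: u_def w_def)
  then have "w1 x u \<le> w1 x w" by (auto simp: level_key_less_iff)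
  moreover have "\<not> Suc (w1 x u) < w1 x w"
  proof
    assume gt: "Suc (w1 x u) < w1 x w"
    then have "Suc (w1 x u) \<in> set x" using w1_in_set[of w x] w k by auto
    then obtain v where v: "1 \<le> v" "v \<le> length x" "w1 x v = Suc (w1 x u)" by (auto elim: in_set_w1)
    then show False
      using level_order_consecutive[OF assms(2,3) v(1,2)] gt by (simp add: level_key_less_iff u_def w_def)
  qed
  ultimately show ?thesis by linarith
qed

lemma level_order_least_in_level:
  assumes "1 \<le> s" "s < length x"
    and up: "w1 x (w1 (level_order x) s) < w1 x (w1 (level_order x) (Suc s))"
    and m: "1 \<le> m" "m < w1 (level_order x) s"
  shows "w1 x m \<noteq> w1 x (w1 (level_order x) s)"
proof
  assume "w1 x m = w1 x (w1 (level_order x) s)"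
  moreover have "m \<le> length x"
    using m perm_w1_bounds[OF is_perm_level_order, of s x] assms(1,2) by simp
  ultimately show False
    using level_order_consecutive[OF assms(1,2) m(1)] up m(2) by (simp add: level_key_less_iff)
qed

lemma level_order_greatest_in_level:
  assumes "1 \<le> s" "s < length x"
    and up: "w1 x (w1 (level_order x) s) < w1 x (w1 (level_order x) (Suc s))"
    and m: "w1 (level_order x) (Suc s) < m" "m \<le> length x"
  shows "w1 x m \<noteq> w1 x (w1 (level_order x) (Suc s))"
proof
  assume "w1 x m = w1 x (w1 (level_order x) (Suc s))"
  then show False
    using level_order_consecutive[OF assms(1,2) _ m(2)] up m(1) by (simp add: level_key_less_iff)
qed

lemma level_order_not_eta_active_within_level:
  assumes "\<not> contains_a x" "1 \<le> s" "s < length x"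
    and same: "w1 x (w1 (level_order x) (Suc s)) = w1 x (w1 (level_order x) s)"
  shows "\<not> eta_active (level_order x) s"
proof
  let ?q = "level_order x"
  define u w where "u = w1 ?q s" and "w = w1 ?q (Suc s)"
  assume active: "eta_active ?q s"
  have u: "1 \<le> u" "u \<le> length x" "pos ?q u = s" and w: "1 \<le> w" "w \<le> length x"
    using perm_w1_bounds[OF is_perm_level_order, of s x] perm_w1_bounds[OF is_perm_level_order, of "Suc s" x]
      pos_w1[OF is_perm_level_order, of s x] assms(2,3)
    by (simp_all add: u_def w_def)
  have "level_key x u < level_key x w"
    using level_order_less_iff[of s x "Suc s"] assms(2,3) by (simp add: u_def w_def)
  then have "w < u" using same by (simp add: level_key_less_iff u_def w_def)
  then have "pos ?q (u - 1) < s"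
    using eta_active_iff[of s ?q] active assms(2,3) w(1) by (simp add: u_def w_def)
  then have "level_key x (u - 1) < level_key x u"
    using level_order_pos_less_iff[of "u - 1" x u] u \<open>w < u\<close> w(1) by simp
  then have below: "w1 x (u - 1) < w1 x u" by (auto simp: level_key_less_iff)
  then have "w < u - 1" using \<open>w < u\<close> same by (cases "w = u - 1") (simp_all add: u_def w_def)
  then have "contains_a x"
    unfolding contains_a_def using below same u(2) w(1) \<open>w < u\<close>
    by (intro exI[of _ w] exI[of _ "u - 1"]) (simp add: u_def w_def)
  then show False using assms(1) by simp
qed

lemma level_order_eta_active_between_levels:
  assumes "\<not> contains_c x" "\<not> contains_d x" "1 \<le> s" "s < length x"
    and up: "w1 x (w1 (level_order x) (Suc s)) = Suc (w1 x (w1 (level_order x) s))"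
  shows "eta_active (level_order x) s"
proof (rule ccontr)
  let ?q = "level_order x"
  define u w where "u = w1 ?q s" and "w = w1 ?q (Suc s)"
  assume inactive: "\<not> eta_active ?q s"
  have u: "1 \<le> u" "u \<le> length x" "pos ?q u = s" and w: "1 \<le> w" "w \<le> length x"
    using perm_w1_bounds[OF is_perm_level_order, of s x] perm_w1_bounds[OF is_perm_level_order, of "Suc s" x]
      pos_w1[OF is_perm_level_order, of s x] assms(3,4)
    by (simp_all add: u_def w_def)
  have "u \<noteq> w" using up by (auto simp: u_def w_def)
  then have "w < u" "u \<noteq> 1" "\<not> pos ?q (u - 1) < s"
    using eta_active_iff[of s ?q] inactive assms(3,4) w(1) by (auto simp: u_def w_def)
  moreover have u': "1 \<le> u - 1" "u - 1 \<le> length x" using u(1,2) \<open>u \<noteq> 1\<close> by linarith+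
  moreover have "pos ?q (u - 1) \<noteq> s"
    using pos_bounds_w1_pos[OF is_perm_level_order, of "u - 1" x] u' u(1) by (auto simp: u_def)
  ultimately have "level_key x u < level_key x (u - 1)"
    using level_order_pos_less_iff[OF u(1,2) u'] u(3) by simp
  then have "w1 x w \<le> w1 x (u - 1)"
    using level_order_consecutive[OF assms(3,4) u'] by (auto simp: level_key_less_iff u_def w_def)
  have up': "w1 x u < w1 x w" using up by (simp add: u_def w_def)
  have least: "w1 x m \<noteq> w1 x u" if "1 \<le> m" "m < u" for m
    using level_order_least_in_level[of s x m] assms(3,4) that up' by (simp add: u_def w_def)
  have greatest: "w1 x m \<noteq> w1 x w" if "w < m" "m \<le> length x" for m
    using level_order_greatest_in_level[of s x m] assms(3,4) that up' by (simp add: u_def w_def)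
  have up'': "w1 x w = Suc (w1 x u)" using up by (simp add: u_def w_def)
  consider "u - 1 = w" | "w < u - 1" using \<open>w < u\<close> by linarith
  then show False
  proof cases
    case 1
    then have "contains_d x"
      unfolding contains_d_def using up'' least greatest u(2) w(1)
      by (intro exI[of _ w]) auto
    then show False using assms(2) by simp
  next
    case 2
    then have "w1 x w < w1 x (u - 1)"
      using \<open>w1 x w \<le> w1 x (u - 1)\<close> greatest[of "u - 1"] u(2) by fastforce
    then have "contains_c x"
      unfolding contains_c_def using 2 up'' least greatest u(2) w(1) \<open>u \<noteq> 1\<close>
      by (intro exI[of _ w] exI[of _ "u - 1"]) auto
    then show False using assms(1) by simp
  qed
qed

lemma upsilon_level_order:
  assumes "x \<in> Cay_acd" "s \<le> length x"
  shows "upsilon (level_order x) s = (if s = 0 then 0 else w1 x (w1 (level_order x) s))"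
  using assms(2)
proof (induction s)
  case 0
  then show ?case by (simp add: upsilon_def)
next
  case (Suc s)
  let ?q = "level_order x"
  have acd: "cayley x" "\<not> contains_a x" "\<not> contains_c x" "\<not> contains_d x"
    using assms(1) by (simp_all add: Cay_acd_def)
  show ?case
  proof (cases "s = 0")
    case True
    then show ?thesis
      using level_order_first_value[OF acd(1)] upsilon_1[of ?q] Suc.prems by (simp add: One_nat_def)
  next
    case False
    then have s: "1 \<le> s" "s < length x" and IH: "upsilon ?q s = w1 x (w1 ?q s)"
      using Suc by simp_all
    from level_order_step_values[OF acd(1) s] show ?thesis
    proof
      assume "w1 x (w1 ?q (Suc s)) = w1 x (w1 ?q s)"
      then show ?thesis
        using level_order_not_eta_active_within_level[OF acd(2) s] upsilon_Suc[of ?q s] IH by simp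
    next
      assume "w1 x (w1 ?q (Suc s)) = Suc (w1 x (w1 ?q s))"
      then show ?thesis
        using level_order_eta_active_between_levels[OF acd(3,4) s] upsilon_Suc[of ?q s] IH by simp
    qed
  qed
qed

lemma eta_level_order:
  assumes "x \<in> Cay_acd"
  shows "eta (level_order x) = x"
proof (rule nth_equalityI)
  let ?q = "level_order x"
  show "length (eta ?q) = length x" by simp
  fix i assume "i < length (eta ?q)"
  then have i: "1 \<le> Suc i" "Suc i \<le> length x" by simp_all
  then have r: "1 \<le> pos ?q (Suc i)" "pos ?q (Suc i) \<le> length x" "w1 ?q (pos ?q (Suc i)) = Suc i"
    using pos_bounds_w1_pos[OF is_perm_level_order, of "Suc i" x] by simp_all
  have "eta ?q ! i = upsilon ?q (pos ?q (Suc i))"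
    using w1_eta[of "Suc i" ?q] i by (simp add: w1_def)
  also have "\<dots> = x ! i"
    using upsilon_level_order[OF assms r(2)] r(1,3) by (simp add: w1_def)
  finally show "eta ?q ! i = x ! i" .
qed

lemma X_eq_Cay_acd: "X = Cay_acd"
proof
  show "X \<subseteq> Cay_acd"
    by (auto simp: X_def Cay_acd_def cayley_eta eta_avoids_a eta_avoids_c eta_avoids_d)
  show "Cay_acd \<subseteq> X"
  proof
    fix x assume "x \<in> Cay_acd"
    then have "x = eta (level_order x)" by (simp add: eta_level_order)
    then show "x \<in> X" unfolding X_def using is_perm_level_order by blast
  qed
qed

lemma is_perm_length_iff: "is_perm p \<and> length p = n \<longleftrightarrow> p \<in> permutations_of_set {1..n}"
proof
  assume "p \<in> permutations_of_set {1..n}"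
  then have "distinct p" "set p = {1..n}" by (simp_all add: permutations_of_set_def)
  moreover from this have "length p = n" using distinct_card[of p] by simp
  ultimately show "is_perm p \<and> length p = n" by (simp add: is_perm_def)
qed (simp add: is_perm_def permutations_of_set_def)

lemma contains_11_iff_not_distinct: "contains_11 x \<longleftrightarrow> \<not> distinct x"
proof -
  have "contains_11 x \<longleftrightarrow> (\<exists>i j. i < j \<and> j < length x \<and> x ! i = x ! j)"
  proof
    assume "contains_11 x"
    then obtain i j where "1 \<le> i" "i < j" "j \<le> length x" "x ! (i - 1) = x ! (j - 1)"
      by (auto simp: contains_11_def w1_def)
    then show "\<exists>i j. i < j \<and> j < length x \<and> x ! i = x ! j"
      by (intro exI[of _ "i - 1"] exI[of _ "j - 1"]) auto
  next
    assume "\<exists>i j. i < j \<and> j < length x \<and> x ! i = x ! j"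
    then obtain i j where "i < j" "j < length x" "x ! i = x ! j" by blast
    then show "contains_11 x"
      unfolding contains_11_def w1_def by (intro exI[of _ "Suc i"] exI[of _ "Suc j"]) auto
  qed
  also have "\<dots> \<longleftrightarrow> \<not> distinct x"
  proof (rule iffI[rotated])
    assume "\<not> distinct x"
    then obtain i j where "i < length x" "j < length x" "i \<noteq> j" "x ! i = x ! j"
      by (auto simp: distinct_conv_nth)
    then show "\<exists>i j. i < j \<and> j < length x \<and> x ! i = x ! j"
      by (metis linorder_neqE_nat)
  next
    assume "\<exists>i j. i < j \<and> j < length x \<and> x ! i = x ! j"
    then obtain i j where "i < j" "j < length x" "x ! i = x ! j" by blast
    then show "\<not> distinct x" unfolding distinct_conv_nth by (metis less_trans order_less_irrefl)
  qed
  finally show ?thesis .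
qed

lemma Cay_n_11_eq_permutations: "Cay_n_11 n = permutations_of_set {1..n}"
proof (intro set_eqI iffI)
  fix x assume "x \<in> Cay_n_11 n"
  then obtain k where "set x = {1..k}" "length x = n" "distinct x"
    by (auto simp: Cay_n_11_def Cay_def cayley_def contains_11_iff_not_distinct)
  moreover from this have "k = n" using distinct_card[of x] by simp
  ultimately show "x \<in> permutations_of_set {1..n}" by (simp add: permutations_of_set_def)
next
  fix x assume "x \<in> permutations_of_set {1..n}"
  then show "x \<in> Cay_n_11 n"
    using is_perm_length_iff[of x n]
    by (auto simp: Cay_n_11_def Cay_def cayley_def is_perm_def contains_11_iff_not_distinct)
qed

lemma bij_betw_eta: "bij_betw eta (permutations_of_set {1..n}) (Cay_n_acd n)"
proof (rule bij_betw_byWitness[where f' = level_order])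
  have acd: "Cay_n_acd n = {x \<in> Cay_acd. length x = n}"
    by (auto simp: Cay_n_acd_def Cay_def Cay_acd_def)
  show "\<forall>p \<in> permutations_of_set {1..n}. level_order (eta p) = p"
    using level_order_eta is_perm_length_iff by blast
  show "\<forall>x \<in> Cay_n_acd n. eta (level_order x) = x"
    using eta_level_order acd by blast
  show "eta ` permutations_of_set {1..n} \<subseteq> Cay_n_acd n"
  proof
    fix y assume "y \<in> eta ` permutations_of_set {1..n}"
    then obtain p where "is_perm p" "length p = n" "y = eta p" using is_perm_length_iff by blast
    then show "y \<in> Cay_n_acd n" using X_eq_Cay_acd acd by (auto simp: X_def)
  qed
  show "level_order ` Cay_n_acd n \<subseteq> permutations_of_set {1..n}"
  proof
    fix p assume "p \<in> level_order ` Cay_n_acd n"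
    then have "is_perm p \<and> length p = n" using is_perm_level_order acd by auto
    then show "p \<in> permutations_of_set {1..n}" by (simp only: is_perm_length_iff)
  qed
qed

theorem theorem7p5:
  shows "X = Cay_acd \<and>
         (\<forall>n. card (Cay_n_acd n) = card (Cay_n_11 n) \<and> card (Cay_n_11 n) = fact n)"
proof (intro conjI allI)
  show "X = Cay_acd" by (rule X_eq_Cay_acd)
  fix n
  show "card (Cay_n_acd n) = card (Cay_n_11 n)"
    using bij_betw_same_card[OF bij_betw_eta] by (simp add: Cay_n_11_eq_permutations)
  show "card (Cay_n_11 n) = fact n" by (simp add: Cay_n_11_eq_permutations)
qed

end
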